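(* Consider the semi-discrete finite volume scheme $$\frac{d}{dt}\mathbf U_{i,j}=-\frac{\mathcal F_{i+\frac12,j}-\mathcal F_{i-\frac12,j}}{\Delta x}-\frac{\mathcal G_{i,j+\frac12}-\mathcal G_{i,j-\frac12}}{\Delta y}+\mathbf S_{i,j}$$ for the stochastic Galerkin shallow water system with time-independent bottom, with the energy conservative fluxes $\mathcal F=\mathcal F^{EC}$, $\mathcal G=\mathcal G^{EC}$ and source $\mathbf S_{i,j}$ defined in the context. Then this scheme is well-balanced, energy conservative, and has local truncation error $\mathcal O(\Delta x^2+\Delta y^2)$.
   Context: Let $\mathcal M_k\in\mathbb R^{K\times K}$, $(\mathcal M_k)_{l,m}=\int\phi_k\phi_l\phi_m\rho$, where $\phi_1\equiv1,\dots,\phi_K$ are polynomials orthonormal with respect to a probability density $\rho$ on $\mathbb R^d$ with all moments finite; $\mathcal P(\widehat z)=\sum_k\widehat z_k\mathcal M_k$ for $\widehat z\in\mathbb R^K$; $g>0$. The SG shallow water system is $\widehat U_t+\widehat F(\widehat U)_x+\widehat G(\widehat U)_y=\widehat S(\widehat U)$, $\widehat U=(\widehat h,\widehat{q^x},\widehat{q^y})\in\mathbb R^{3K}$, with $\widehat F=\big(\widehat{q^x};\ \mathcal P(\widehat{q^x})\mathcal P^{-1}(\widehat h)\widehat{q^x}+\tfrac12 g\mathcal P(\widehat h)\widehat h;\ \mathcal P(\widehat{q^x})\mathcal P^{-1}(\widehat h)\widehat{q^y}\big)$, $\widehat G=\big(\widehat{q^y};\ \mathcal P(\widehat{q^y})\mathcal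 P^{-1}(\widehat h)\widehat{q^x};\ \mathcal P(\widehat{q^y})\mathcal P^{-1}(\widehat h)\widehat{q^y}+\tfrac12 g\mathcal P(\widehat h)\widehat h\big)$, $\widehat S=\big(0;-g\mathcal P(\widehat h)\widehat B_x;-g\mathcal P(\widehat h)\widehat B_y\big)$, bottom $\widehat B(x,y)\in\mathbb R^K$ time independent. Discretization: uniform rectangular cells with sizes $\Delta x,\Delta y$, centers $(x_i,y_j)$; $\mathbf U_{i,j}(t)=(\mathbf h_{i,j},\mathbf q^x_{i,j},\mathbf q^y_{i,j})$ approximates the cell average of $\widehat U$, $\mathbf B_{i,j}$ that of $\widehat B$; $\mathcal P(\mathbf h_{i,j})$ is assumed positive definite; $\mathbf u_{i,j}=\mathcal P^{-1}(\mathbf h_{i,j})\mathbf q^x_{i,j}$, $\mathbf v_{i,j}=\mathcal P^{-1}(\mathbf h_{i,j})\mathbf q^y_{i,j}$. For any cell quantity $\mathbf a$: $\overline{\mathbf a}_{i+\frac12,j}=\tfrac12(\mathbf a_{i,j}+\mathbf a_{i+1,j})$, $[\![\mathbf a]\!]_{i+\frac12,j}=\mathbf a_{i+1,j}-\mathbf a_{i,j}$, and analogously $\overline{\mathbf a}_{i,j+\frac12}$, $[\![\mathbf a]\!]_{i,j+\frac12}$ in $j$; $\overline{\mathcal P(\mathbf h)\mathbf h}$ denotes the average of $\mathcal P(\mathbf h_{i,j})\mathbf h_{i,j}$. EC fluxes and source (all averages at the indicated interface): $\mathcal F^{EC}_{i+\frac12,j}=\big(\mathcal P(\overline{\mathbf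 h})\overline{\mathbf u};\ \tfrac12 g\,\overline{\mathcal P(\mathbf h)\mathbf h}+\mathcal P(\overline{\mathbf u})\mathcal P(\overline{\mathbf h})\overline{\mathbf u};\ \mathcal P(\overline{\mathbf v})\mathcal P(\overline{\mathbf h})\overline{\mathbf u}\big)_{i+\frac12,j}$, $\mathcal G^{EC}_{i,j+\frac12}=\big(\mathcal P(\overline{\mathbf h})\overline{\mathbf v};\ \mathcal P(\overline{\mathbf u})\mathcal P(\overline{\mathbf h})\overline{\mathbf v};\ \tfrac12 g\,\overline{\mathcal P(\mathbf h)\mathbf h}+\mathcal P(\overline{\mathbf v})\mathcal P(\overline{\mathbf h})\overline{\mathbf v}\big)_{i,j+\frac12}$, $\mathbf S_{i,j}=\Big(0;\ -\tfrac{g}{2\Delta x}\big(\mathcal P(\overline{\mathbf h}_{i+\frac12,j})[\![\mathbf B]\!]_{i+\frac12,j}+\mathcal P(\overline{\mathbf h}_{i-\frac12,j})[\![\mathbf B]\!]_{i-\frac12,j}\big);\ -\tfrac{g}{2\Delta y}\big(\mathcal P(\overline{\mathbf h}_{i,j+\frac12})[\![\mathbf B]\!]_{i,j+\frac12}+\mathcal P(\overline{\mathbf h}_{i,j-\frac12})[\![\mathbf B]\!]_{i,j-\frac12}\big)\Big)$. Discrete energy: $\mathbf E_{i,j}=\tfrac12\big((\mathbf q^x_{i,j})^\top\mathbf u_{i,j}+(\mathbf q^y_{i,j})^\top\mathbf v_{i,j}\big)+\tfrac12 g\|\mathbf h_{i,j}\|^2+g\mathbf h_{i,j}^\top\mathbf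 B_{i,j}$. Well-balanced: whenever $\mathbf q^x_{i,j}=\mathbf q^y_{i,j}=0$ and $\mathbf h_{i,j}+\mathbf B_{i,j}=\mathbf C$ (the same vector) for all $i,j$, the scheme gives $\frac{d}{dt}\mathbf U_{i,j}=0$ for all $i,j$. Energy conservative: there exist interface quantities $\mathcal H_{i+\frac12,j},\mathcal K_{i,j+\frac12}$ (numerical energy fluxes) such that along the scheme $\frac{d}{dt}\mathbf E_{i,j}=-\frac{\mathcal H_{i+\frac12,j}-\mathcal H_{i-\frac12,j}}{\Delta x}-\frac{\mathcal K_{i,j+\frac12}-\mathcal K_{i,j-\frac12}}{\Delta y}$ for all $i,j$. Local truncation error $\mathcal O(\Delta x^p+\Delta y^p)$: for smooth $\widehat U,\widehat B$ (with $\mathcal P(\widehat h)$ positive definite) inserted as cell values, the right-hand side of the scheme equals $\big(-\widehat F(\widehat U)_x-\widehat G(\widehat U)_y+\widehat S(\widehat U)\big)(x_i,y_j)+\mathcal O(\Delta x^p+\Delta y^p)$. *)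

theory Defs
  imports "HOL-Analysis.Analysis"
begin

definition poly_fun :: "(real^'d \<Rightarrow> real) \<Rightarrow> bool" where
  "poly_fun f \<longleftrightarrow> (\<exists>(A::('d \<Rightarrow> nat) set) c. finite A \<and>
      (\<forall>x. f x = (\<Sum>\<alpha>\<in>A. c \<alpha> * (\<Prod>i\<in>UNIV. (x$i) ^ (\<alpha> i)))))"

definition prob_density_all_moments :: "(real^'d \<Rightarrow> real) \<Rightarrow> bool" where
  "prob_density_all_moments \<rho> \<longleftrightarrow>
     \<rho> \<in> borel_measurable lborel \<and> (\<forall>x. 0 \<le> \<rho> x) \<and>
     integrable lborel \<rho> \<and> (LINT x|lborel. \<rho> x) = 1 \<and>
     (\<forall>\<alpha>::'d \<Rightarrow> nat. integrable lborel (\<lambda>x. (\<Prod>i\<in>UNIV. (x$i) ^ (\<alpha> i)) * \<rho> x))"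

text \<open>phi indexed by the finite type 'k (so K = CARD('k)); k1 is the index with phi k1 = 1.\<close>
definition sg_basis :: "(real^'d \<Rightarrow> real) \<Rightarrow> ('k::finite \<Rightarrow> real^'d \<Rightarrow> real) \<Rightarrow> 'k \<Rightarrow> bool" where
  "sg_basis \<rho> \<phi> k1 \<longleftrightarrow> prob_density_all_moments \<rho> \<and> (\<forall>k. poly_fun (\<phi> k)) \<and>
     \<phi> k1 = (\<lambda>_. 1) \<and>
     (\<forall>k l. (LINT x|lborel. \<phi> k x * \<phi> l x * \<rho> x) = (if k = l then 1 else 0))"

definition Mmat :: "(real^'d \<Rightarrow> real) \<Rightarrow> ('k::finite \<Rightarrow> real^'d \<Rightarrow> real) \<Rightarrow> 'k \<Rightarrow> real^'k^'k" where
  "Mmat \<rho> \<phi> k = (\<chi> l m. LINT x|lborel. \<phi> k x * \<phi> l x * \<phi> m x * \<rho> x)"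

definition Pop :: "(real^'d \<Rightarrow> real) \<Rightarrow> ('k::finite \<Rightarrow> real^'d \<Rightarrow> real) \<Rightarrow> real^'k \<Rightarrow> real^'k^'k" where
  "Pop \<rho> \<phi> z = (\<Sum>k\<in>UNIV. z$k *\<^sub>R Mmat \<rho> \<phi> k)"

definition pos_def :: "real^'k^'k \<Rightarrow> bool" where
  "pos_def A \<longleftrightarrow> transpose A = A \<and> (\<forall>x. x \<noteq> 0 \<longrightarrow> 0 < x \<bullet> (A *v x))"

text \<open>States (h, q^x, q^y). In the scheme definitions below, P stands for the operator
  z \<mapsto> P(z) (instantiated with Pop rho phi in the theorem).\<close>
type_synonym 'k st = "(real^'k) \<times> (real^'k) \<times> (real^'k)"

definition hh :: "'k st \<Rightarrow> real^'k" where "hh U = fst U"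
definition qx :: "'k st \<Rightarrow> real^'k" where "qx U = fst (snd U)"
definition qy :: "'k st \<Rightarrow> real^'k" where "qy U = snd (snd U)"

definition uvel :: "(real^'k \<Rightarrow> real^'k^'k) \<Rightarrow> 'k st \<Rightarrow> real^'k" where
  "uvel P U = matrix_inv (P (hh U)) *v qx U"
definition vvel :: "(real^'k \<Rightarrow> real^'k^'k) \<Rightarrow> 'k st \<Rightarrow> real^'k" where
  "vvel P U = matrix_inv (P (hh U)) *v qy U"

definition avg :: "'a::real_vector \<Rightarrow> 'a \<Rightarrow> 'a" where
  "avg a b = (1/2) *\<^sub>R (a + b)"

definition Fec :: "(real^'k \<Rightarrow> real^'k^'k) \<Rightarrow> real \<Rightarrow> 'k st \<Rightarrow> 'k st \<Rightarrow> 'k st" where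
  "Fec P g UL UR =
    (let hb = avg (hh UL) (hh UR); ub = avg (uvel P UL) (uvel P UR);
         vb = avg (vvel P UL) (vvel P UR);
         Phh = avg (P (hh UL) *v hh UL) (P (hh UR) *v hh UR)
     in (P hb *v ub,
         (g/2) *\<^sub>R Phh + P ub *v (P hb *v ub),
         P vb *v (P hb *v ub)))"

definition Gec :: "(real^'k \<Rightarrow> real^'k^'k) \<Rightarrow> real \<Rightarrow> 'k st \<Rightarrow> 'k st \<Rightarrow> 'k st" where
  "Gec P g UD UU =
    (let hb = avg (hh UD) (hh UU); ub = avg (uvel P UD) (uvel P UU);
         vb = avg (vvel P UD) (vvel P UU);
         Phh = avg (P (hh UD) *v hh UD) (P (hh UU) *v hh UU)
     in (P hb *v vb,
         P ub *v (P hb *v vb),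
         (g/2) *\<^sub>R Phh + P vb *v (P hb *v vb)))"

definition Ssrc :: "(real^'k \<Rightarrow> real^'k^'k) \<Rightarrow> real \<Rightarrow> real \<Rightarrow> real \<Rightarrow>
    (int \<Rightarrow> int \<Rightarrow> 'k st) \<Rightarrow> (int \<Rightarrow> int \<Rightarrow> real^'k) \<Rightarrow> int \<Rightarrow> int \<Rightarrow> 'k st" where
  "Ssrc P g dx dy U B i j =
    (0,
     - (g / (2*dx)) *\<^sub>R
        (P (avg (hh (U i j)) (hh (U (i+1) j))) *v (B (i+1) j - B i j)
       + P (avg (hh (U (i-1) j)) (hh (U i j))) *v (B i j - B (i-1) j)),
     - (g / (2*dy)) *\<^sub>R
        (P (avg (hh (U i j)) (hh (U i (j+1)))) *v (B i (j+1) - B i j)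
       + P (avg (hh (U i (j-1))) (hh (U i j))) *v (B i j - B i (j-1))))"

definition scheme_rhs :: "(real^'k \<Rightarrow> real^'k^'k) \<Rightarrow> real \<Rightarrow> real \<Rightarrow> real \<Rightarrow>
    (int \<Rightarrow> int \<Rightarrow> 'k st) \<Rightarrow> (int \<Rightarrow> int \<Rightarrow> real^'k) \<Rightarrow> int \<Rightarrow> int \<Rightarrow> 'k st" where
  "scheme_rhs P g dx dy U B i j =
      - (1/dx) *\<^sub>R (Fec P g (U i j) (U (i+1) j) - Fec P g (U (i-1) j) (U i j))
      - (1/dy) *\<^sub>R (Gec P g (U i j) (U i (j+1)) - Gec P g (U i (j-1)) (U i j))
      + Ssrc P g dx dy U B i j"

definition energy :: "(real^'k \<Rightarrow> real^'k^'k) \<Rightarrow> real \<Rightarrow> 'k st \<Rightarrow> real^'k \<Rightarrow> real" where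
  "energy P g U b = (1/2) * (qx U \<bullet> uvel P U + qy U \<bullet> vvel P U)
      + (1/2) * g * (norm (hh U))^2 + g * (hh U \<bullet> b)"

definition Fhat :: "(real^'k \<Rightarrow> real^'k^'k) \<Rightarrow> real \<Rightarrow> 'k st \<Rightarrow> 'k st" where
  "Fhat P g U = (qx U,
      P (qx U) *v (matrix_inv (P (hh U)) *v qx U) + (g/2) *\<^sub>R (P (hh U) *v hh U),
      P (qx U) *v (matrix_inv (P (hh U)) *v qy U))"

definition Ghat :: "(real^'k \<Rightarrow> real^'k^'k) \<Rightarrow> real \<Rightarrow> 'k st \<Rightarrow> 'k st" where
  "Ghat P g U = (qy U,
      P (qy U) *v (matrix_inv (P (hh U)) *v qx U),
      P (qy U) *v (matrix_inv (P (hh U)) *v qy U) + (g/2) *\<^sub>R (P (hh U) *v hh U))"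

definition Shat :: "(real^'k \<Rightarrow> real^'k^'k) \<Rightarrow> real \<Rightarrow> 'k st \<Rightarrow> real^'k \<Rightarrow> real^'k \<Rightarrow> 'k st" where
  "Shat P g U Bx By = (0, - g *\<^sub>R (P (hh U) *v Bx), - g *\<^sub>R (P (hh U) *v By))"

text \<open>C-infinity functions of two real variables: continuous, with partial derivatives in
  x and y existing everywhere and again C-infinity (all partial derivatives of all orders
  exist and are continuous).\<close>
coinductive smooth2 :: "(real \<Rightarrow> real \<Rightarrow> 'a::real_normed_vector) \<Rightarrow> bool" where
  "continuous_on UNIV (\<lambda>p. f (fst p) (snd p)) \<Longrightarrow>
   (\<And>x y. ((\<lambda>s. f s y) has_vector_derivative fx x y) (at x)) \<Longrightarrow>
   (\<And>x y. ((\<lambda>s. f x s) has_vector_derivative fy x y) (at y)) \<Longrightarrow>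
   smooth2 fx \<Longrightarrow> smooth2 fy \<Longrightarrow> smooth2 f"

definition pdx :: "(real \<Rightarrow> real \<Rightarrow> 'a::real_normed_vector) \<Rightarrow> real \<Rightarrow> real \<Rightarrow> 'a" where
  "pdx f x y = vector_derivative (\<lambda>s. f s y) (at x)"
definition pdy :: "(real \<Rightarrow> real \<Rightarrow> 'a::real_normed_vector) \<Rightarrow> real \<Rightarrow> real \<Rightarrow> 'a" where
  "pdy f x y = vector_derivative (\<lambda>s. f x s) (at y)"

end

theory Submission
  imports Defs
begin

text \<open>Write \<open>a \<star> b = P a *v b\<close> for the Galerkin product \<open>P = Pop \<rho> \<phi>\<close>.  All that matters
  about it is that \<open>x \<bullet> (a \<star> y)\<close> is a totally symmetric trilinear form, which gives the discrete
  chain rule \<open>avg a b \<star> (a - b) = (a \<star> a - b \<star> b) / 2\<close>.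

  Attaching to each EC interface flux half of the bottom source of the adjacent cell writes the
  scheme as a difference of one-sided fluxes \<open>Fsrc\<close>.  At a lake at rest the discrete chain rule
  for \<open>h\<close> makes \<open>Fsrc\<close> depend on the left state only, so the difference vanishes.  Paired with
  the entropy variables \<open>V\<close>, the discrete chain rule for \<open>h\<close>, \<open>u\<close> and \<open>v\<close> shows that
  \<open>V(L) \<bullet> Fsrc(L, R) - g/2 u\<^sub>L \<bullet> (h\<^sub>L \<star> h\<^sub>L)\<close> is symmetric in \<open>(L, R)\<close>: this is the numerical
  energy flux.  Finally, with the left state frozen, \<open>Fsrc\<close> is a smooth function of the right
  state whose derivative at the centre is half that of the physical flux plus source, so the
  scheme is a central difference quotient, accurate to second order.\<close>

section \<open>Derivatives of matrix inverses\<close>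

lemma matrix_inv:
  fixes A :: "'a::semiring_1^'n^'m"
  assumes "invertible A"
  shows matrix_inv_right: "A ** matrix_inv A = mat 1"
    and matrix_inv_left: "matrix_inv A ** A = mat 1"
proof -
  have "A ** matrix_inv A = mat 1 \<and> matrix_inv A ** A = mat 1"
    using assms unfolding invertible_def matrix_inv_def by (rule someI_ex)
  then show "A ** matrix_inv A = mat 1" "matrix_inv A ** A = mat 1" by auto
qed

lemma matrix_vector_mul_inv_right:
  fixes A :: "'a::comm_semiring_1^'n^'m"
  shows "invertible A \<Longrightarrow> A *v (matrix_inv A *v x) = x"
  by (simp add: matrix_vector_mul_assoc matrix_inv_right)

lemma pos_def_invertible: "pos_def A \<Longrightarrow> invertible A"
proof -
  assume "pos_def A"
  then have "A *v x = 0 \<Longrightarrow> x = 0" for x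
    unfolding pos_def_def by force
  then show "invertible A"
    using invertible_left_inverse matrix_left_invertible_ker by blast
qed

lemma matrix_inv_Cramer:
  fixes A :: "real^'n^'n"
  assumes "invertible A"
  shows "matrix_inv A = (\<chi> i j. det (\<chi> r c. if c = i then axis j 1 $ r else A $ r $ c) / det A)"
proof -
  have "matrix_inv A $ i $ j = det (\<chi> r c. if c = i then axis j 1 $ r else A $ r $ c) / det A" for i j
  proof -
    have "A *v (matrix_inv A *v axis j 1) = axis j 1"
      by (rule matrix_vector_mul_inv_right[OF assms])
    then have "(matrix_inv A *v axis j 1) $ i = det (\<chi> r c. if c = i then axis j 1 $ r else A $ r $ c) / det A"
      using cramer[OF invertible_det_nz[THEN iffD1, OF assms]] by auto
    then show ?thesis
      by (simp add: matrix_vector_mult_def axis_def if_distrib cong: if_cong)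
  qed
  then show ?thesis by (simp add: vec_eq_iff)
qed

lemma differentiable_vec_lambda:
  fixes f :: "real \<Rightarrow> 'b::euclidean_space^'n"
  assumes "\<And>i. (\<lambda>s. f s $ i) differentiable (at t)"
  shows "f differentiable (at t)"
proof -
  have "bounded_linear (axis i :: 'b \<Rightarrow> 'b^'n)" for i
    by (simp add: linear_conv_bounded_linear[symmetric] linear_iff vec_eq_iff axis_def)
  then have "(\<lambda>s. axis i (f s $ i)) differentiable (at t)" for i
    by (intro differentiable_compose[of "axis i", OF bounded_linear_imp_differentiable] assms)
  then have "(\<lambda>s. \<Sum>i\<in>UNIV. axis i (f s $ i)) differentiable (at t)"
    by simp
  moreover have "(\<Sum>i\<in>UNIV. axis i (v $ i)) = v" for v :: "'b^'n"
    by (simp add: vec_eq_iff sum_component axis_def if_distrib cong: if_cong)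
  ultimately show ?thesis by simp
qed

lemma differentiable_vec_nth:
  fixes f :: "real \<Rightarrow> 'b::real_normed_vector^'n"
  shows "f differentiable (at t) \<Longrightarrow> (\<lambda>s. f s $ i) differentiable (at t)"
  by (rule differentiable_compose[of "\<lambda>x. x $ i", OF bounded_linear_imp_differentiable]) auto

lemma differentiable_det:
  fixes M :: "real \<Rightarrow> real^'n^'n"
  assumes "\<And>i j. (\<lambda>s. M s $ i $ j) differentiable (at t)"
  shows "(\<lambda>s. det (M s)) differentiable (at t)"
proof -
  have "(\<lambda>s. \<Prod>i\<in>UNIV. M s $ i $ p i) differentiable (at t)" for p :: "'n \<Rightarrow> 'n"
  proof -
    have "\<forall>i. \<exists>D. ((\<lambda>s. M s $ i $ p i) has_derivative D) (at t)"
      using assms unfolding differentiable_def by blast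
    then obtain D where "\<forall>i. ((\<lambda>s. M s $ i $ p i) has_derivative D i) (at t)"
      by metis
    then show ?thesis by (intro differentiableI[OF has_derivative_prod]) auto
  qed
  then show ?thesis
    unfolding det_def
    by (intro differentiable_sum differentiable_mult differentiable_const)
      (auto simp: finite_permutations)
qed

lemma differentiable_matrix_inv:
  fixes M :: "real \<Rightarrow> real^'n^'n"
  assumes "M differentiable (at t)" and "\<And>s. invertible (M s)"
  shows "(\<lambda>s. matrix_inv (M s)) differentiable (at t)"
proof -
  have M: "(\<lambda>s. M s $ i $ j) differentiable (at t)" for i j
    by (intro differentiable_vec_nth assms)
  have "(\<lambda>s. det (\<chi> r c. if c = i then axis j 1 $ r else M s $ r $ c) / det (M s))
          differentiable (at t)" for i j
  proof (intro differentiable_divide differentiable_det)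
    fix a b
    show "(\<lambda>s. (\<chi> r c. if c = i then axis j 1 $ r else M s $ r $ c) $ a $ b) differentiable (at t)"
      by (cases "b = i") (auto intro: M)
  qed (use M assms(2) invertible_det_nz in auto)
  then show ?thesis
    unfolding matrix_inv_Cramer[OF assms(2)] by (intro differentiable_vec_lambda) auto
qed

lemma bounded_bilinear_matrix_matrix_mult:
  "bounded_bilinear (\<lambda>(A::real^'n^'m) (B::real^'p^'n). A ** B)"
  by (rule bilinear_conv_bounded_bilinear[THEN iffD1])
    (simp add: bilinear_def linear_iff vec_eq_iff matrix_matrix_mult_def sum.distrib
      algebra_simps sum_distrib_left)

lemma bounded_bilinear_matrix_vector_mult:
  "bounded_bilinear (\<lambda>(A::real^'n^'m) (x::real^'n). A *v x)"
  by (rule bilinear_conv_bounded_bilinear[THEN iffD1])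
    (simp add: bilinear_def linear_iff vec_eq_iff matrix_vector_mult_def sum.distrib
      algebra_simps sum_distrib_left)

lemma has_vector_derivative_matrix_inv:
  fixes M :: "real \<Rightarrow> real^'n^'n"
  assumes M': "(M has_vector_derivative M') (at t)" and inv: "\<And>s. invertible (M s)"
  shows "((\<lambda>s. matrix_inv (M s)) has_vector_derivative
            - (matrix_inv (M t) ** M' ** matrix_inv (M t))) (at t)"
proof -
  let ?N = "\<lambda>s. matrix_inv (M s)"
  obtain N' where N': "(?N has_vector_derivative N') (at t)"
    using differentiable_matrix_inv[OF differentiableI_vector[OF M'] inv]
    vector_derivative_works by blast
  have "((\<lambda>s. ?N s ** M s) has_vector_derivative (?N t ** M' + N' ** M t)) (at t)"
    by (rule bounded_bilinear.has_vector_derivative[OF bounded_bilinear_matrix_matrix_mult N' M'])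
  moreover have "(\<lambda>s. ?N s ** M s) = (\<lambda>s. mat 1)"
    using matrix_inv_left[OF inv] by auto
  ultimately have "((\<lambda>s. mat 1) has_vector_derivative (?N t ** M' + N' ** M t)) (at t)"
    by simp
  then have 0: "?N t ** M' + N' ** M t = 0"
    using vector_derivative_unique_at has_vector_derivative_const by blast
  have "N' = N' ** M t ** ?N t"
    by (simp add: matrix_mul_assoc[symmetric] matrix_inv_right[OF inv])
  also have "\<dots> = (?N t ** M' + N' ** M t) ** ?N t - ?N t ** M' ** ?N t"
    by (simp add: bounded_bilinear.add_left[OF bounded_bilinear_matrix_matrix_mult] matrix_mul_assoc)
  also have "\<dots> = - (?N t ** M' ** ?N t)"
    using 0 by simp
  finally show ?thesis using N' by simp
qed

lemma has_vector_derivative_matrix_inv_mult: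
  fixes M :: "real \<Rightarrow> real^'n^'n"
  assumes M: "(M has_vector_derivative M') (at t)" and q: "(q has_vector_derivative q') (at t)"
    and inv: "\<And>s. invertible (M s)"
  shows "((\<lambda>s. matrix_inv (M s) *v q s) has_vector_derivative
            matrix_inv (M t) *v (q' - M' *v (matrix_inv (M t) *v q t))) (at t)"
proof -
  have "((\<lambda>s. matrix_inv (M s) *v q s) has_vector_derivative
          matrix_inv (M t) *v q' + (- (matrix_inv (M t) ** M' ** matrix_inv (M t))) *v q t) (at t)"
    by (rule bounded_bilinear.has_vector_derivative[OF bounded_bilinear_matrix_vector_mult
          has_vector_derivative_matrix_inv[OF M inv] q])
  then show ?thesis
    by (simp add: bounded_bilinear.minus_left[OF bounded_bilinear_matrix_vector_mult]
        matrix_vector_mult_diff_distrib matrix_vector_mul_assoc matrix_mul_assoc)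
qed

lemma has_real_derivative_inner_matrix_inv:
  fixes M :: "real \<Rightarrow> real^'n^'n"
  assumes M: "(M has_vector_derivative M') (at t)" and q: "(q has_vector_derivative q') (at t)"
    and inv: "\<And>s. invertible (M s)" and sym: "transpose (M t) = M t"
  defines "u \<equiv> matrix_inv (M t) *v q t"
  shows "((\<lambda>s. q s \<bullet> (matrix_inv (M s) *v q s)) has_real_derivative
            2 * (u \<bullet> q') - u \<bullet> (M' *v u)) (at t)"
proof -
  have "((\<lambda>s. q s \<bullet> (matrix_inv (M s) *v q s)) has_vector_derivative
          q t \<bullet> (matrix_inv (M t) *v (q' - M' *v u)) + q' \<bullet> u) (at t)"
    unfolding u_def
    by (rule bounded_bilinear.has_vector_derivative[OF bounded_bilinear_inner q
          has_vector_derivative_matrix_inv_mult[OF M q inv]])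
  moreover have "q t \<bullet> (matrix_inv (M t) *v w) = u \<bullet> w" for w
  proof -
    have "q t = M t *v u"
      unfolding u_def by (simp add: matrix_vector_mul_inv_right[OF inv])
    then have "q t \<bullet> (matrix_inv (M t) *v w) = u \<bullet> (transpose (M t) *v (matrix_inv (M t) *v w))"
      by (metis dot_lmul_matrix vector_transpose_matrix)
    also have "\<dots> = u \<bullet> w"
      by (simp add: sym matrix_vector_mul_inv_right[OF inv])
    finally show ?thesis .
  qed
  ultimately show ?thesis
    by (simp add: has_real_derivative_iff_has_vector_derivative inner_diff_right inner_commute)
qed

section \<open>Iterated derivatives and central differences\<close>

fun n_times_differentiable :: "nat \<Rightarrow> (real \<Rightarrow> 'a::real_normed_vector) \<Rightarrow> bool" where
  "n_times_differentiable 0 f \<longleftrightarrow> True"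
| "n_times_differentiable (Suc n) f \<longleftrightarrow>
     (\<exists>f'. (\<forall>x. (f has_vector_derivative f' x) (at x)) \<and> n_times_differentiable n f')"

lemma n_times_differentiable_SucD:
  "n_times_differentiable (Suc n) f \<Longrightarrow> n_times_differentiable n f"
proof (induction n arbitrary: f)
  case (Suc n)
  then obtain f' where "\<forall>x. (f has_vector_derivative f' x) (at x)" "n_times_differentiable (Suc n) f'"
    by auto
  then show ?case using Suc.IH by auto
qed simp

lemma n_times_differentiable_const: "n_times_differentiable n (\<lambda>s. c)"
  by (induction n arbitrary: c) (auto intro!: exI[of _ "\<lambda>x. 0"])

lemma n_times_differentiable_add:
  "n_times_differentiable n f \<Longrightarrow> n_times_differentiable n g \<Longrightarrow>
   n_times_differentiable n (\<lambda>s. f s + g s)"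
proof (induction n arbitrary: f g)
  case (Suc n)
  then obtain f' g' where d: "\<forall>x. (f has_vector_derivative f' x) (at x)" "n_times_differentiable n f'"
    "\<forall>x. (g has_vector_derivative g' x) (at x)" "n_times_differentiable n g'"
    by auto
  then have "n_times_differentiable n (\<lambda>x. f' x + g' x)"
    using Suc.IH by blast
  moreover have "\<forall>x. ((\<lambda>s. f s + g s) has_vector_derivative f' x + g' x) (at x)"
    using d by (auto intro: has_vector_derivative_add)
  ultimately show ?case by auto
qed simp

lemma n_times_differentiable_bounded_linear:
  "bounded_linear L \<Longrightarrow> n_times_differentiable n f \<Longrightarrow> n_times_differentiable n (\<lambda>s. L (f s))"
proof (induction n arbitrary: f)
  case (Suc n)
  then obtain f' where d: "\<forall>x. (f has_vector_derivative f' x) (at x)" "n_times_differentiable n f'"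
    by auto
  then have "n_times_differentiable n (\<lambda>x. L (f' x))"
    using Suc by blast
  moreover have "\<forall>x. ((\<lambda>s. L (f s)) has_vector_derivative L (f' x)) (at x)"
    using d Suc.prems(1) by (auto intro: bounded_linear.has_vector_derivative)
  ultimately show ?case by auto
qed simp

lemma n_times_differentiable_bounded_bilinear:
  "bounded_bilinear b \<Longrightarrow> n_times_differentiable n f \<Longrightarrow> n_times_differentiable n g \<Longrightarrow>
   n_times_differentiable n (\<lambda>s. b (f s) (g s))"
proof (induction n arbitrary: f g)
  case (Suc n)
  then obtain f' g' where d: "\<forall>x. (f has_vector_derivative f' x) (at x)" "n_times_differentiable n f'"
    "\<forall>x. (g has_vector_derivative g' x) (at x)" "n_times_differentiable n g'"
    by auto
  have "n_times_differentiable n f" "n_times_differentiable n g"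
    using Suc.prems n_times_differentiable_SucD by auto
  then have "n_times_differentiable n (\<lambda>s. b (f s) (g' s) + b (f' s) (g s))"
    using Suc.IH Suc.prems(1) d n_times_differentiable_add by blast
  moreover have "\<forall>x. ((\<lambda>s. b (f s) (g s)) has_vector_derivative b (f x) (g' x) + b (f' x) (g x)) (at x)"
    using d by (auto intro: bounded_bilinear.has_vector_derivative[OF Suc.prems(1)])
  ultimately show ?case by auto
qed simp

lemma n_times_differentiable_scaleR:
  "n_times_differentiable n f \<Longrightarrow> n_times_differentiable n (\<lambda>s. c *\<^sub>R f s)"
  by (rule n_times_differentiable_bounded_linear[OF bounded_linear_scaleR_right])

lemma n_times_differentiable_minus:
  "n_times_differentiable n f \<Longrightarrow> n_times_differentiable n (\<lambda>s. - f s)"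
  by (rule n_times_differentiable_bounded_linear[OF bounded_linear_minus[OF bounded_linear_ident]])

lemma n_times_differentiable_diff:
  "n_times_differentiable n f \<Longrightarrow> n_times_differentiable n g \<Longrightarrow>
   n_times_differentiable n (\<lambda>s. f s - g s)"
  using n_times_differentiable_add[of n f "\<lambda>s. - g s"] n_times_differentiable_minus by auto

lemma n_times_differentiable_Pair:
  assumes "n_times_differentiable n f" and "n_times_differentiable n g"
  shows "n_times_differentiable n (\<lambda>s. (f s, g s))"
proof -
  have "n_times_differentiable n (\<lambda>s. (f s, 0) + (0, g s))"
    by (intro n_times_differentiable_add assms
        n_times_differentiable_bounded_linear[OF bounded_linear_Pair[OF bounded_linear_ident bounded_linear_zero]]
        n_times_differentiable_bounded_linear[OF bounded_linear_Pair[OF bounded_linear_zero bounded_linear_ident]])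
  then show ?thesis by simp
qed

lemma n_times_differentiable_matrix_inv:
  fixes M :: "real \<Rightarrow> real^'n^'n"
  shows "\<forall>s. invertible (M s) \<Longrightarrow> n_times_differentiable n M \<Longrightarrow>
    n_times_differentiable n (\<lambda>s. matrix_inv (M s))"
proof (induction n arbitrary: M)
  case (Suc n)
  then obtain M' where d: "\<forall>x. (M has_vector_derivative M' x) (at x)" "n_times_differentiable n M'"
    by auto
  have "n_times_differentiable n M" using Suc.prems n_times_differentiable_SucD by auto
  then have "n_times_differentiable n (\<lambda>s. matrix_inv (M s))"
    using Suc.IH Suc.prems(1) by blast
  then have "n_times_differentiable n (\<lambda>s. - (matrix_inv (M s) ** M' s ** matrix_inv (M s)))"
    by (intro n_times_differentiable_minus
        n_times_differentiable_bounded_bilinear[OF bounded_bilinear_matrix_matrix_mult] d(2))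
  moreover have "\<forall>x. ((\<lambda>s. matrix_inv (M s)) has_vector_derivative
                    - (matrix_inv (M x) ** M' x ** matrix_inv (M x))) (at x)"
    using has_vector_derivative_matrix_inv d(1) Suc.prems(1) by blast
  ultimately show ?case by auto
qed simp

lemma smooth2_n_times_differentiable:
  "smooth2 F \<Longrightarrow> n_times_differentiable n (\<lambda>s. F s y) \<and> n_times_differentiable n (\<lambda>s. F x s)"
proof (induction n arbitrary: F x y)
  case (Suc n)
  from Suc.prems obtain Fx Fy where
    Fx: "\<And>x y. ((\<lambda>s. F s y) has_vector_derivative Fx x y) (at x)" and
    Fy: "\<And>x y. ((\<lambda>s. F x s) has_vector_derivative Fy x y) (at y)" and
    "smooth2 Fx" "smooth2 Fy"
    by (cases rule: smooth2.cases) blast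
  then have "n_times_differentiable n (\<lambda>s. Fx s y)" "n_times_differentiable n (\<lambda>s. Fy x s)"
    using Suc.IH by blast+
  then show ?case
    using Fx Fy by (auto intro: exI[of _ "\<lambda>s. Fx s y"] exI[of _ "\<lambda>s. Fy x s"])
qed simp

lemma norm_diff_le_derivative_bound:
  fixes f :: "real \<Rightarrow> 'a::real_normed_vector"
  assumes "a \<le> b" and "\<And>t. t \<in> {a..b} \<Longrightarrow> (f has_vector_derivative f' t) (at t)"
    and "\<And>t. t \<in> {a..b} \<Longrightarrow> norm (f' t) \<le> B"
  shows "norm (f b - f a) \<le> B * (b - a)"
proof -
  have "norm (f b - f a) \<le> B * norm (b - a)"
  proof (rule differentiable_bound[of "{a..b}" f "\<lambda>t h. h *\<^sub>R f' t"])
    show "(f has_derivative (\<lambda>h. h *\<^sub>R f' t)) (at t within {a..b})" if "t \<in> {a..b}" for t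
      using assms(2)[OF that] by (simp add: has_vector_derivative_def has_derivative_at_withinI)
    show "onorm (\<lambda>h. h *\<^sub>R f' t) \<le> B" if "t \<in> {a..b}" for t
      using assms(3)[OF that] by (simp add: onorm_scaleR_left[OF bounded_linear_ident] onorm_id)
  qed (use assms(1) in auto)
  with assms(1) show ?thesis by simp
qed

lemma has_vector_derivative_affine_comp:
  assumes "(f has_vector_derivative f') (at (x + c * s))"
  shows "((\<lambda>s. f (x + c * s)) has_vector_derivative c *\<^sub>R f') (at s)"
proof -
  have "((\<lambda>s. x + c * s) has_vector_derivative c) (at s)"
    by (auto intro!: derivative_eq_intros)
  from vector_diff_chain_at[OF this assms] show ?thesis
    by (simp add: o_def)
qed

lemma central_difference_bound:
  fixes A :: "real \<Rightarrow> 'a::real_normed_vector"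
  assumes d1: "\<And>t. (A has_vector_derivative A1 t) (at t)"
    and d2: "\<And>t. (A1 has_vector_derivative A2 t) (at t)"
    and d3: "\<And>t. (A2 has_vector_derivative A3 t) (at t)"
    and M: "\<And>t. t \<in> {x-h..x+h} \<Longrightarrow> norm (A3 t) \<le> M" and h: "0 < h"
  shows "norm ((1/h) *\<^sub>R (A (x + h) - A (x - h)) - 2 *\<^sub>R A1 x) \<le> (2 * M) * h\<^sup>2"
proof -
  have plus: "((\<lambda>s. f (x + s)) has_vector_derivative f' (x + s)) (at s)"
    and minus: "((\<lambda>s. f (x - s)) has_vector_derivative - f' (x - s)) (at s)"
    if "\<And>t. (f has_vector_derivative f' t) (at t)" for f f' :: "real \<Rightarrow> 'a" and s
    using has_vector_derivative_affine_comp[OF that, of x 1 s]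
      has_vector_derivative_affine_comp[OF that, of x "-1" s] by simp_all
  have "norm (A3 x) \<le> M" by (rule M) (use h in simp)
  then have "0 \<le> M" using norm_ge_zero order_trans by blast
  define p1 where "p1 \<tau> = A1 (x + \<tau>) + A1 (x - \<tau>) - 2 *\<^sub>R A1 x" for \<tau>
  define p0 where "p0 \<tau> = A (x + \<tau>) - A (x - \<tau>) - (2 * \<tau>) *\<^sub>R A1 x" for \<tau>
  have dp1: "(p1 has_vector_derivative A2 (x + \<tau>) - A2 (x - \<tau>)) (at \<tau>)" for \<tau>
    unfolding p1_def
    using has_vector_derivative_diff[OF has_vector_derivative_add[OF plus[OF d2] minus[OF d2]]
        has_vector_derivative_const]
    by simp
  have dp0: "(p0 has_vector_derivative p1 \<tau>) (at \<tau>)" for \<tau>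
  proof -
    have "((\<lambda>\<tau>. (2 * \<tau>) *\<^sub>R A1 x) has_vector_derivative 2 *\<^sub>R A1 x) (at \<tau>)"
      by (auto intro!: derivative_eq_intros)
    from has_vector_derivative_diff[OF has_vector_derivative_diff[OF plus[OF d1] minus[OF d1]] this]
    show ?thesis unfolding p0_def p1_def by simp
  qed
  have bound2: "norm (A2 (x + \<sigma>) - A2 (x - \<sigma>)) \<le> 2 * M * h" if "\<sigma> \<in> {0..h}" for \<sigma>
  proof -
    have "norm (A2 (x + \<sigma>) - A2 (x - \<sigma>)) \<le> M * ((x + \<sigma>) - (x - \<sigma>))"
      by (rule norm_diff_le_derivative_bound) (use that d3 M in auto)
    also have "\<dots> \<le> 2 * M * h" using that \<open>0 \<le> M\<close> by (auto intro: mult_left_mono)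
    finally show ?thesis .
  qed
  have bound1: "norm (p1 \<sigma>) \<le> 2 * M * h * h" if "\<sigma> \<in> {0..h}" for \<sigma>
  proof -
    have "norm (p1 \<sigma> - p1 0) \<le> (2 * M * h) * (\<sigma> - 0)"
      by (rule norm_diff_le_derivative_bound) (use that dp1 bound2 in auto)
    also have "\<dots> \<le> 2 * M * h * h" using that \<open>0 \<le> M\<close> h by (auto intro: mult_left_mono)
    finally show ?thesis by (simp add: p1_def scaleR_2)
  qed
  have "norm (p0 h - p0 0) \<le> (2 * M * h * h) * (h - 0)"
    by (rule norm_diff_le_derivative_bound) (use h dp0 bound1 in auto)
  then have "norm (p0 h) \<le> 2 * M * h^3"
    by (simp add: p0_def power3_eq_cube)
  moreover have "(1/h) *\<^sub>R (A (x + h) - A (x - h)) - 2 *\<^sub>R A1 x = (1/h) *\<^sub>R p0 h"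
    using h unfolding p0_def by (simp add: algebra_simps)
  ultimately show ?thesis
    using h by (simp add: pos_divide_le_eq power2_eq_square power3_eq_cube mult_ac)
qed

text \<open>The fourth derivative only serves to make the third one continuous, hence bounded near \<open>x\<close>.\<close>

lemma central_difference_error:
  fixes A :: "real \<Rightarrow> 'a::real_normed_vector"
  assumes "n_times_differentiable 4 A" and "(A has_vector_derivative D) (at x)"
  shows "\<exists>C. \<forall>h. 0 < h \<longrightarrow> h < 1 \<longrightarrow>
           norm ((1/h) *\<^sub>R (A (x + h) - A (x - h)) - 2 *\<^sub>R D) \<le> C * h\<^sup>2"
proof -
  obtain A1 A2 A3 A4 where
    d1: "\<And>t. (A has_vector_derivative A1 t) (at t)" and
    d2: "\<And>t. (A1 has_vector_derivative A2 t) (at t)" and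
    d3: "\<And>t. (A2 has_vector_derivative A3 t) (at t)" and
    d4: "\<And>t. (A3 has_vector_derivative A4 t) (at t)"
    using assms(1) by (auto simp: numeral_eq_Suc)
  have "continuous_on {x-1..x+1} A3"
    using d4 continuous_on_vector_derivative has_vector_derivative_at_within by blast
  then have "bounded (A3 ` {x-1..x+1})"
    by (intro compact_imp_bounded compact_continuous_image) auto
  then obtain M where M: "\<And>t. t \<in> {x-1..x+1} \<Longrightarrow> norm (A3 t) \<le> M"
    unfolding bounded_iff by blast
  have "D = A1 x" using vector_derivative_unique_at[OF assms(2) d1] .
  then have "norm ((1/h) *\<^sub>R (A (x + h) - A (x - h)) - 2 *\<^sub>R D) \<le> (2 * M) * h\<^sup>2"
    if "0 < h" "h < 1" for h
    using central_difference_bound[where x = x and M = M, OF d1 d2 d3 _ that(1)] M that by auto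
  then show ?thesis by blast
qed

section \<open>The stochastic Galerkin product\<close>

lemma Mmat_swap:
  shows Mmat_swap13: "Mmat \<rho> \<phi> k $ l $ m = Mmat \<rho> \<phi> m $ l $ k"
    and Mmat_swap23: "Mmat \<rho> \<phi> k $ l $ m = Mmat \<rho> \<phi> k $ m $ l"
  by (simp_all add: Mmat_def mult_ac)

lemma Pop_nth: "Pop \<rho> \<phi> z $ l $ m = (\<Sum>k\<in>UNIV. z $ k * Mmat \<rho> \<phi> k $ l $ m)"
  by (simp add: Pop_def sum_component)

locale symmetric_product =
  fixes P :: "real^'k::finite \<Rightarrow> real^'k^'k"
  assumes linear: "linear P"
    and commute: "P a *v b = P b *v a"
    and symmetric: "transpose (P a) = P a"

lemma symmetric_product_Pop: "symmetric_product (Pop \<rho> \<phi>)"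
proof (rule symmetric_product.intro)
  show "linear (Pop \<rho> \<phi>)"
    by (simp add: linear_iff vec_eq_iff Pop_nth sum.distrib sum_distrib_left algebra_simps)
  show "Pop \<rho> \<phi> a *v b = Pop \<rho> \<phi> b *v a" for a b
  proof -
    have "(\<Sum>m\<in>UNIV. (\<Sum>k\<in>UNIV. a $ k * Mmat \<rho> \<phi> k $ l $ m) * b $ m)
        = (\<Sum>k\<in>UNIV. (\<Sum>m\<in>UNIV. b $ m * Mmat \<rho> \<phi> m $ l $ k) * a $ k)" for l
    proof -
      have "(\<Sum>m\<in>UNIV. (\<Sum>k\<in>UNIV. a $ k * Mmat \<rho> \<phi> k $ l $ m) * b $ m)
          = (\<Sum>m\<in>UNIV. \<Sum>k\<in>UNIV. a $ k * Mmat \<rho> \<phi> k $ l $ m * b $ m)"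
        by (simp add: sum_distrib_right)
      also have "\<dots> = (\<Sum>k\<in>UNIV. \<Sum>m\<in>UNIV. a $ k * Mmat \<rho> \<phi> k $ l $ m * b $ m)"
        by (rule sum.swap)
      also have "\<dots> = (\<Sum>k\<in>UNIV. (\<Sum>m\<in>UNIV. b $ m * Mmat \<rho> \<phi> m $ l $ k) * a $ k)"
        by (simp add: sum_distrib_left sum_distrib_right Mmat_swap13[of \<rho> \<phi> _ l] mult_ac)
      finally show ?thesis .
    qed
    then show ?thesis by (simp add: vec_eq_iff matrix_vector_mult_def Pop_nth)
  qed
  show "transpose (Pop \<rho> \<phi> a) = Pop \<rho> \<phi> a" for a
    by (simp add: vec_eq_iff transpose_def Pop_nth Mmat_swap23)
qed

context symmetric_product
begin

lemma P_add: "P (a + b) = P a + P b"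
  and P_scaleR: "P (c *\<^sub>R a) = c *\<^sub>R P a"
  and P_zero: "P 0 = 0"
  using linear by (simp_all add: linear_add linear_scale linear_0)

lemma inner_P_swap: "x \<bullet> (P a *v y) = (P a *v x) \<bullet> y"
  by (metis symmetric dot_lmul_matrix vector_transpose_matrix)

lemma bounded_linear_P: "bounded_linear P"
  using linear by (simp add: linear_conv_bounded_linear)

lemma bounded_bilinear_P: "bounded_bilinear (\<lambda>a b. P a *v b)"
  by (rule bilinear_conv_bounded_bilinear[THEN iffD1])
    (simp add: bilinear_def linear_iff P_add P_scaleR matrix_vector_mult_add_rdistrib
      matrix_vector_right_distrib matrix_vector_mult_scaleR scaleR_matrix_vector_assoc)

lemma P_avg_diff: "P (avg a b) *v (a - b) = (1/2) *\<^sub>R (P a *v a - P b *v b)"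
proof -
  have "P (avg a b) *v (a - b) = (1/2) *\<^sub>R (P a *v a - P a *v b + (P b *v a - P b *v b))"
    by (simp add: avg_def P_add P_scaleR scaleR_matrix_vector_assoc[symmetric]
        matrix_vector_mult_add_rdistrib matrix_vector_mult_diff_distrib algebra_simps)
  also have "\<dots> = (1/2) *\<^sub>R (P a *v a - P b *v b)"
    by (simp add: commute[of b a])
  finally show ?thesis .
qed

lemma inner_diff_P_avg: "(a - b) \<bullet> (P (avg a b) *v w) = (1/2) * ((P a *v a - P b *v b) \<bullet> w)"
  by (simp add: inner_P_swap P_avg_diff)

end

section \<open>One-sided fluxes and entropy variables\<close>

lemma bounded_linear_hh: "bounded_linear hh"
  and bounded_linear_qx: "bounded_linear qx"
  and bounded_linear_qy: "bounded_linear qy"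
  unfolding hh_def[abs_def] qx_def[abs_def] qy_def[abs_def]
  by (intro bounded_linear_fst bounded_linear_compose[OF bounded_linear_fst bounded_linear_snd]
      bounded_linear_compose[OF bounded_linear_snd bounded_linear_snd])+

lemma avg_commute: "avg a b = avg b a"
  by (simp add: avg_def add.commute)

lemma avg_self [simp]: "avg a a = a"
  and avg_zero_left [simp]: "avg 0 a = (1/2) *\<^sub>R a"
  by (simp_all add: avg_def flip: scaleR_2)

definition swap_xy :: "'k::finite st \<Rightarrow> 'k st" where
  "swap_xy U = (hh U, qy U, qx U)"

lemma swap_xy_components [simp]:
  "hh (swap_xy U) = hh U" "qx (swap_xy U) = qy U" "qy (swap_xy U) = qx U"
  "uvel P (swap_xy U) = vvel P U" "vvel P (swap_xy U) = uvel P U"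
  by (simp_all add: swap_xy_def hh_def qx_def qy_def uvel_def vvel_def)

lemma swap_xy_Pair [simp]: "swap_xy (h, a, b) = (h, b, a)"
  by (simp add: swap_xy_def hh_def qx_def qy_def)

lemma swap_xy_swap_xy [simp]: "swap_xy (swap_xy U) = U"
  by (simp add: swap_xy_def hh_def qx_def qy_def)

lemma inner_swap_xy: "swap_xy X \<bullet> swap_xy Y = X \<bullet> Y"
  by (simp add: swap_xy_def hh_def qx_def qy_def inner_prod_def)

lemma inner_swap_xy_right: "X \<bullet> swap_xy Y = swap_xy X \<bullet> Y"
  by (metis inner_swap_xy swap_xy_swap_xy)

lemma norm_swap_xy [simp]: "norm (swap_xy X) = norm X"
  by (simp add: norm_eq_sqrt_inner inner_swap_xy)

lemma bounded_linear_swap_xy: "bounded_linear swap_xy"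
proof (rule bounded_linear_intro[of _ 1])
  show "swap_xy (X + Y) = swap_xy X + swap_xy Y" "swap_xy (r *\<^sub>R X) = r *\<^sub>R swap_xy X" for X Y r
    by (simp_all add: swap_xy_def hh_def qx_def qy_def)
qed simp

lemma Fec_commute: "Fec P g L R = Fec P g R L"
  by (simp add: Fec_def Let_def avg_def add.commute)

lemma Gec_commute: "Gec P g L R = Gec P g R L"
  by (simp add: Gec_def Let_def avg_def add.commute)

lemma Gec_swap_xy: "Gec P g L R = swap_xy (Fec P g (swap_xy L) (swap_xy R))"
  by (simp add: Gec_def Fec_def Let_def)

lemma Ghat_swap_xy: "Ghat P g U = swap_xy (Fhat P g (swap_xy U))"
  by (simp add: Ghat_def Fhat_def)

text \<open>The EC flux of an interface plus the half of the bottom source of the left cell that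
  \<open>Ssrc\<close> attributes to this interface.\<close>

definition Fsrc :: "(real^'k::finite \<Rightarrow> real^'k^'k) \<Rightarrow> real \<Rightarrow> 'k st \<Rightarrow> 'k st \<Rightarrow> real^'k \<Rightarrow> real^'k \<Rightarrow> 'k st"
  where "Fsrc P g L R bL bR = Fec P g L R + (0, (g/2) *\<^sub>R (P (avg (hh L) (hh R)) *v (bR - bL)), 0)"

lemma Fsrc_reverse:
  "Fsrc P g R L bR bL = Fec P g L R - (0, (g/2) *\<^sub>R (P (avg (hh L) (hh R)) *v (bR - bL)), 0)"
proof -
  have "P m *v (bL - bR) = - (P m *v (bR - bL))" for m
    by (simp add: matrix_vector_mult_diff_distrib)
  then show ?thesis
    by (simp add: Fsrc_def Fec_commute[of P g R] avg_commute[of "hh R"])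
qed

definition Gsrc :: "(real^'k::finite \<Rightarrow> real^'k^'k) \<Rightarrow> real \<Rightarrow> 'k st \<Rightarrow> 'k st \<Rightarrow> real^'k \<Rightarrow> real^'k \<Rightarrow> 'k st"
  where "Gsrc P g L R bL bR = swap_xy (Fsrc P g (swap_xy L) (swap_xy R) bL bR)"

lemma Gsrc_eq: "Gsrc P g L R bL bR = Gec P g L R + (0, 0, (g/2) *\<^sub>R (P (avg (hh L) (hh R)) *v (bR - bL)))"
  by (simp add: Gsrc_def Fsrc_def Gec_swap_xy swap_xy_def hh_def qx_def qy_def)

lemma Gsrc_reverse:
  "Gsrc P g R L bR bL = Gec P g L R - (0, 0, (g/2) *\<^sub>R (P (avg (hh L) (hh R)) *v (bR - bL)))"
proof -
  have "P m *v (bL - bR) = - (P m *v (bR - bL))" for m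
    by (simp add: matrix_vector_mult_diff_distrib)
  then show ?thesis
    by (simp add: Gsrc_eq Gec_commute[of P g R] avg_commute[of "hh R"])
qed

lemma scheme_rhs_eq_Fsrc_Gsrc:
  "scheme_rhs P g dx dy U B i j =
     - (1/dx) *\<^sub>R (Fsrc P g (U i j) (U (i+1) j) (B i j) (B (i+1) j)
                   - Fsrc P g (U i j) (U (i-1) j) (B i j) (B (i-1) j))
     - (1/dy) *\<^sub>R (Gsrc P g (U i j) (U i (j+1)) (B i j) (B i (j+1))
                   - Gsrc P g (U i j) (U i (j-1)) (B i j) (B i (j-1)))"
  unfolding Fsrc_reverse[of P g "U i j" "U (i-1) j"] Gsrc_reverse[of P g "U i j" "U i (j-1)"]
  by (simp add: scheme_rhs_def Ssrc_def Fsrc_def Gsrc_eq prod_eq_iff algebra_simps)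

text \<open>The gradient of \<open>energy P g U b\<close> with respect to \<open>U = (h, q\<^sup>x, q\<^sup>y)\<close>.\<close>

definition entropy_variables :: "(real^'k::finite \<Rightarrow> real^'k^'k) \<Rightarrow> real \<Rightarrow> 'k st \<Rightarrow> real^'k \<Rightarrow> 'k st"
  where "entropy_variables P g U b =
    (g *\<^sub>R (hh U + b) - (1/2) *\<^sub>R (P (uvel P U) *v uvel P U + P (vvel P U) *v vvel P U),
     uvel P U, vvel P U)"

lemma entropy_variables_swap_xy:
  "entropy_variables P g (swap_xy U) b = swap_xy (entropy_variables P g U b)"
  by (simp add: entropy_variables_def add.commute)

definition energy_flux_x :: "(real^'k::finite \<Rightarrow> real^'k^'k) \<Rightarrow> real \<Rightarrow> 'k st \<Rightarrow> 'k st \<Rightarrow> real^'k \<Rightarrow> real^'k \<Rightarrow> real"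
  where "energy_flux_x P g L R bL bR =
    entropy_variables P g L bL \<bullet> Fsrc P g L R bL bR - (g/2) * (uvel P L \<bullet> (P (hh L) *v hh L))"

definition energy_flux_y :: "(real^'k::finite \<Rightarrow> real^'k^'k) \<Rightarrow> real \<Rightarrow> 'k st \<Rightarrow> 'k st \<Rightarrow> real^'k \<Rightarrow> real^'k \<Rightarrow> real"
  where "energy_flux_y P g L R bL bR = energy_flux_x P g (swap_xy L) (swap_xy R) bL bR"

lemma entropy_variables_inner_Fsrc:
  "entropy_variables P g L bL \<bullet> Fsrc P g L R bL bR
     = energy_flux_x P g L R bL bR + (g/2) * (uvel P L \<bullet> (P (hh L) *v hh L))"
  by (simp add: energy_flux_x_def)

lemma entropy_variables_inner_Gsrc:
  "entropy_variables P g L bL \<bullet> Gsrc P g L R bL bR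
     = energy_flux_y P g L R bL bR + (g/2) * (vvel P L \<bullet> (P (hh L) *v hh L))"
proof -
  have "entropy_variables P g L bL \<bullet> Gsrc P g L R bL bR
      = entropy_variables P g (swap_xy L) bL \<bullet> Fsrc P g (swap_xy L) (swap_xy R) bL bR"
    by (simp add: Gsrc_def entropy_variables_swap_xy inner_swap_xy_right)
  then show ?thesis by (simp add: energy_flux_y_def energy_flux_x_def)
qed

section \<open>Well-balancing, energy conservation and consistency\<close>

context symmetric_product
begin

lemma Fsrc_lake_at_rest:
  assumes "qx L = 0" "qy L = 0" "qx R = 0" "qy R = 0" and "hh L + bL = hh R + bR"
  shows "Fsrc P g L R bL bR = (0, (g/2) *\<^sub>R (P (hh L) *v hh L), 0)"
proof -
  have "uvel P L = 0" "vvel P L = 0" "uvel P R = 0" "vvel P R = 0"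
    using assms by (simp_all add: uvel_def vvel_def)
  moreover have "bR - bL = hh L - hh R"
    using assms(5) by (simp add: algebra_simps)
  ultimately show ?thesis
    unfolding Fsrc_def Fec_def Let_def
    by (simp add: P_zero P_avg_diff) (simp add: avg_def P_zero vec_eq_iff field_simps)
qed

lemma Gsrc_lake_at_rest:
  assumes "qx L = 0" "qy L = 0" "qx R = 0" "qy R = 0" and "hh L + bL = hh R + bR"
  shows "Gsrc P g L R bL bR = (0, 0, (g/2) *\<^sub>R (P (hh L) *v hh L))"
  using Fsrc_lake_at_rest[of "swap_xy L" "swap_xy R"] assms by (simp add: Gsrc_def)

lemma well_balanced:
  assumes "\<forall>i j. qx (U i j) = 0 \<and> qy (U i j) = 0 \<and> hh (U i j) + B i j = C"
  shows "scheme_rhs P g dx dy U B i j = 0"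
  using assms by (simp add: scheme_rhs_eq_Fsrc_Gsrc Fsrc_lake_at_rest Gsrc_lake_at_rest)

lemma has_real_derivative_energy:
  assumes W: "(W has_vector_derivative W') (at t)" and inv: "\<And>s. invertible (P (hh (W s)))"
  shows "((\<lambda>s. energy P g (W s) b) has_real_derivative
            entropy_variables P g (W t) b \<bullet> W') (at t)"
proof -
  let ?h = "hh (W t)" and ?u = "uvel P (W t)" and ?v = "vvel P (W t)"
  have h: "((\<lambda>s. hh (W s)) has_vector_derivative hh W') (at t)"
    by (rule bounded_linear.has_vector_derivative[OF bounded_linear_hh W])
  have Ph: "((\<lambda>s. P (hh (W s))) has_vector_derivative P (hh W')) (at t)"
    by (rule bounded_linear.has_vector_derivative[OF bounded_linear_P h])
  have "((\<lambda>s. qx (W s) \<bullet> uvel P (W s)) has_real_derivative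
          2 * (?u \<bullet> qx W') - ?u \<bullet> (P (hh W') *v ?u)) (at t)"
    unfolding uvel_def
    by (rule has_real_derivative_inner_matrix_inv[OF Ph
          bounded_linear.has_vector_derivative[OF bounded_linear_qx W] inv symmetric])
  moreover have "((\<lambda>s. qy (W s) \<bullet> vvel P (W s)) has_real_derivative
          2 * (?v \<bullet> qy W') - ?v \<bullet> (P (hh W') *v ?v)) (at t)"
    unfolding vvel_def
    by (rule has_real_derivative_inner_matrix_inv[OF Ph
          bounded_linear.has_vector_derivative[OF bounded_linear_qy W] inv symmetric])
  moreover have "((\<lambda>s. (norm (hh (W s)))\<^sup>2) has_real_derivative 2 * (?h \<bullet> hh W')) (at t)"
    using bounded_bilinear.has_vector_derivative[OF bounded_bilinear_inner h h]
    by (simp add: power2_norm_eq_inner has_real_derivative_iff_has_vector_derivative inner_commute)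
  moreover have "((\<lambda>s. hh (W s) \<bullet> b) has_real_derivative hh W' \<bullet> b) (at t)"
    using bounded_linear.has_vector_derivative[OF bounded_linear_inner_left h]
    by (simp add: has_real_derivative_iff_has_vector_derivative)
  ultimately have "((\<lambda>s. energy P g (W s) b) has_real_derivative
      (1/2) * ((2 * (?u \<bullet> qx W') - ?u \<bullet> (P (hh W') *v ?u)) + (2 * (?v \<bullet> qy W') - ?v \<bullet> (P (hh W') *v ?v)))
      + (1/2) * g * (2 * (?h \<bullet> hh W')) + g * (hh W' \<bullet> b)) (at t)"
    unfolding energy_def by (intro DERIV_add DERIV_cmult)
  moreover have "w \<bullet> (P a *v w) = a \<bullet> (P w *v w)" for a w
    by (metis commute inner_P_swap inner_commute)
  ultimately show ?thesis
    by (simp add: entropy_variables_def inner_prod_def inner_diff_right inner_add_right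
        hh_def qx_def qy_def inner_commute algebra_simps)
qed

lemma energy_flux_x_commute: "energy_flux_x P g L R bL bR = energy_flux_x P g R L bR bL"
proof -
  define hL where "hL = hh L"
  define hR where "hR = hh R"
  define uL where "uL = uvel P L"
  define uR where "uR = uvel P R"
  define vL where "vL = vvel P L"
  define vR where "vR = vvel P R"
  define hb where "hb = avg hL hR"
  define ub where "ub = avg uL uR"
  define vb where "vb = avg vL vR"
  define F1 where "F1 = P hb *v ub"
  define F2 where "F2 = (g/2) *\<^sub>R avg (P hL *v hL) (P hR *v hR) + P ub *v F1"
  define F3 where "F3 = P vb *v F1"
  define S where "S = (g/2) *\<^sub>R (P hb *v (bR - bL))"
  have Fec: "Fec P g L R = (F1, F2, F3)"
    by (simp add: Fec_def Let_def hL_def hR_def uL_def uR_def vL_def vR_def hb_def ub_def vb_def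
        F1_def F2_def F3_def)
  have FL: "Fsrc P g L R bL bR = (F1, F2 + S, F3)"
    by (simp add: Fsrc_def Fec S_def hb_def hL_def hR_def)
  have FR: "Fsrc P g R L bR bL = (F1, F2 - S, F3)"
    by (simp add: Fsrc_reverse Fec S_def hb_def hL_def hR_def)
  have u: "(uL - uR) \<bullet> (P ub *v F1) = (1/2) * ((P uL *v uL - P uR *v uR) \<bullet> F1)"
    by (simp add: ub_def inner_diff_P_avg)
  have v: "(vL - vR) \<bullet> (P vb *v F1) = (1/2) * ((P vL *v vL - P vR *v vR) \<bullet> F1)"
    by (simp add: vb_def inner_diff_P_avg)
  have "(hL - hR) \<bullet> F1 = (1/2) * ((P hL *v hL - P hR *v hR) \<bullet> ub)"
    unfolding F1_def hb_def by (rule inner_diff_P_avg)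
  then have h: "g * ((hL - hR) \<bullet> F1) = (g/4) * ((uL + uR) \<bullet> (P hL *v hL - P hR *v hR))"
    by (simp add: ub_def avg_def inner_commute[of "P hL *v hL - P hR *v hR"])
  have b: "(uL + uR) \<bullet> S = g * ((bR - bL) \<bullet> F1)"
  proof -
    have "(uL + uR) \<bullet> S = g * (ub \<bullet> (P hb *v (bR - bL)))"
      by (simp add: S_def ub_def avg_def)
    also have "\<dots> = g * ((bR - bL) \<bullet> F1)"
      using inner_P_swap[of ub hb "bR - bL"] by (simp add: F1_def inner_commute)
    finally show ?thesis .
  qed
  show ?thesis
    using u v h b
    unfolding energy_flux_x_def FL FR entropy_variables_def hL_def[symmetric] hR_def[symmetric]
      uL_def[symmetric] uR_def[symmetric] vL_def[symmetric] vR_def[symmetric]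
    by (simp add: F2_def F3_def avg_def inner_add_left inner_diff_left inner_add_right
        inner_diff_right algebra_simps)
qed

lemma energy_flux_y_commute: "energy_flux_y P g L R bL bR = energy_flux_y P g R L bR bL"
  by (simp add: energy_flux_y_def energy_flux_x_commute)

lemma entropy_variables_inner_scheme_rhs:
  "entropy_variables P g (U i j) (B i j) \<bullet> scheme_rhs P g dx dy U B i j =
     - (energy_flux_x P g (U i j) (U (i+1) j) (B i j) (B (i+1) j)
        - energy_flux_x P g (U (i-1) j) (U i j) (B (i-1) j) (B i j)) / dx
     - (energy_flux_y P g (U i j) (U i (j+1)) (B i j) (B i (j+1))
        - energy_flux_y P g (U i (j-1)) (U i j) (B i (j-1)) (B i j)) / dy"
  unfolding scheme_rhs_eq_Fsrc_Gsrc inner_diff_right inner_minus_right inner_scaleR_right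
    entropy_variables_inner_Fsrc entropy_variables_inner_Gsrc
    energy_flux_x_commute[where L = "U i j" and R = "U (i-1) j"]
    energy_flux_y_commute[where L = "U i j" and R = "U i (j-1)"]
  by (simp add: diff_divide_distrib)

lemma energy_conservative:
  assumes inv: "\<And>t i j. invertible (P (hh (U t i j)))"
    and U': "\<And>t i j. ((\<lambda>s. U s i j) has_vector_derivative scheme_rhs P g dx dy (U t) B i j) (at t)"
  shows "((\<lambda>s. energy P g (U s i j) (B i j)) has_real_derivative
           - (energy_flux_x P g (U t i j) (U t (i+1) j) (B i j) (B (i+1) j)
              - energy_flux_x P g (U t (i-1) j) (U t i j) (B (i-1) j) (B i j)) / dx
           - (energy_flux_y P g (U t i j) (U t i (j+1)) (B i j) (B i (j+1))
              - energy_flux_y P g (U t i (j-1)) (U t i j) (B i (j-1)) (B i j)) / dy) (at t)"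
proof -
  have "((\<lambda>s. energy P g (U s i j) (B i j)) has_real_derivative
          entropy_variables P g (U t i j) (B i j) \<bullet> scheme_rhs P g dx dy (U t) B i j) (at t)"
    by (rule has_real_derivative_energy[OF U' inv])
  then show ?thesis
    unfolding entropy_variables_inner_scheme_rhs .
qed

lemma n_times_differentiable_velocities:
  assumes "n_times_differentiable n W" and "\<And>s. invertible (P (hh (W s)))"
  shows "n_times_differentiable n (\<lambda>s. uvel P (W s))"
    and "n_times_differentiable n (\<lambda>s. vvel P (W s))"
proof -
  have "n_times_differentiable n (\<lambda>s. matrix_inv (P (hh (W s))))"
    using assms
    by (intro n_times_differentiable_matrix_inv n_times_differentiable_bounded_linear[OF bounded_linear_P]
        n_times_differentiable_bounded_linear[OF bounded_linear_hh]) auto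
  then show "n_times_differentiable n (\<lambda>s. uvel P (W s))" "n_times_differentiable n (\<lambda>s. vvel P (W s))"
    unfolding uvel_def vvel_def using assms(1)
    by (auto intro: n_times_differentiable_bounded_bilinear[OF bounded_bilinear_matrix_vector_mult]
        n_times_differentiable_bounded_linear[OF bounded_linear_qx]
        n_times_differentiable_bounded_linear[OF bounded_linear_qy])
qed

lemma n_times_differentiable_Fsrc:
  assumes W1: "n_times_differentiable n W1" "\<And>s. invertible (P (hh (W1 s)))"
    and W2: "n_times_differentiable n W2" "\<And>s. invertible (P (hh (W2 s)))"
    and "n_times_differentiable n b1" "n_times_differentiable n b2"
  shows "n_times_differentiable n (\<lambda>s. Fsrc P g (W1 s) (W2 s) (b1 s) (b2 s))"
  using assms n_times_differentiable_velocities[OF W1] n_times_differentiable_velocities[OF W2]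
  unfolding Fsrc_def Fec_def Let_def avg_def
  by (intro n_times_differentiable_add n_times_differentiable_Pair n_times_differentiable_scaleR
      n_times_differentiable_diff n_times_differentiable_const
      n_times_differentiable_bounded_bilinear[OF bounded_bilinear_P]
      n_times_differentiable_bounded_linear[OF bounded_linear_hh]) auto

lemma has_vector_derivative_velocities:
  assumes W: "(W has_vector_derivative W') (at x)" and inv: "\<And>s. invertible (P (hh (W s)))"
  obtains u' v' where "((\<lambda>s. uvel P (W s)) has_vector_derivative u') (at x)"
      and "qx W' = P (hh (W x)) *v u' + P (hh W') *v uvel P (W x)"
      and "((\<lambda>s. vvel P (W s)) has_vector_derivative v') (at x)"
      and "qy W' = P (hh (W x)) *v v' + P (hh W') *v vvel P (W x)"
proof -
  have Ph: "((\<lambda>s. P (hh (W s))) has_vector_derivative P (hh W')) (at x)"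
    by (intro bounded_linear.has_vector_derivative[OF bounded_linear_P]
        bounded_linear.has_vector_derivative[OF bounded_linear_hh] W)
  have solve: "P (hh (W x)) *v (matrix_inv (P (hh (W x))) *v (q' - P (hh W') *v w))
      = q' - P (hh W') *v w" for q' w
    by (rule matrix_vector_mul_inv_right[OF inv])
  show ?thesis
    by (rule that[OF has_vector_derivative_matrix_inv_mult[OF Ph
          bounded_linear.has_vector_derivative[OF bounded_linear_qx W] inv, folded uvel_def] _
          has_vector_derivative_matrix_inv_mult[OF Ph
          bounded_linear.has_vector_derivative[OF bounded_linear_qy W] inv, folded vvel_def]])
      (simp_all add: solve uvel_def vvel_def)
qed

lemma has_vector_derivative_Fsrc:
  assumes W: "(W has_vector_derivative W') (at x)" and b: "(b has_vector_derivative b') (at x)"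
    and inv: "\<And>s. invertible (P (hh (W s)))"
  shows "\<exists>E. ((\<lambda>s. Fhat P g (W s)) has_vector_derivative E) (at x) \<and>
    ((\<lambda>s. Fsrc P g (W x) (W s) (b x) (b s)) has_vector_derivative
       (1/2) *\<^sub>R (E + (0, g *\<^sub>R (P (hh (W x)) *v b'), 0))) (at x)"
proof -
  obtain u' v' where u': "((\<lambda>s. uvel P (W s)) has_vector_derivative u') (at x)"
      and qx': "qx W' = P (hh (W x)) *v u' + P (hh W') *v uvel P (W x)"
      and v': "((\<lambda>s. vvel P (W s)) has_vector_derivative v') (at x)"
      and "qy W' = P (hh (W x)) *v v' + P (hh W') *v vvel P (W x)"
    using has_vector_derivative_velocities[OF W inv] .
  have h': "((\<lambda>s. hh (W s)) has_vector_derivative hh W') (at x)"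
    and q': "((\<lambda>s. qx (W s)) has_vector_derivative qx W') (at x)"
    by (intro bounded_linear.has_vector_derivative[OF bounded_linear_hh]
        bounded_linear.has_vector_derivative[OF bounded_linear_qx] W)+
  have q0: "qx (W x) = P (hh (W x)) *v uvel P (W x)"
    by (simp add: uvel_def matrix_vector_mul_inv_right[OF inv])
  have Fhat: "Fhat P g U = (qx U, P (qx U) *v uvel P U + (g/2) *\<^sub>R (P (hh U) *v hh U),
      P (qx U) *v vvel P U)" for U
    by (simp add: Fhat_def uvel_def vvel_def)
  have avg: "((\<lambda>s. avg (f s) (k s)) has_vector_derivative avg f' k') (at x)"
    if "(f has_vector_derivative f') (at x)" "(k has_vector_derivative k') (at x)"
    for f k :: "real \<Rightarrow> real^'k" and f' k'
    unfolding avg_def by (intro bounded_linear.has_vector_derivative[OF bounded_linear_scaleR_right]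
        has_vector_derivative_add that)
  note rules = has_vector_derivative_const avg has_vector_derivative_Pair has_vector_derivative_add
    has_vector_derivative_diff bounded_bilinear.has_vector_derivative[OF bounded_bilinear_P]
    bounded_linear.has_vector_derivative[OF bounded_linear_scaleR_right] h' q' u' v' b
  define E where "E = (qx W',
      P (qx (W x)) *v u' + P (qx W') *v uvel P (W x)
        + (g/2) *\<^sub>R (P (hh (W x)) *v hh W' + P (hh W') *v hh (W x)),
      P (qx (W x)) *v v' + P (qx W') *v vvel P (W x))"
  have "((\<lambda>s. Fhat P g (W s)) has_vector_derivative E) (at x)"
    unfolding Fhat E_def by (intro rules)
  moreover have "((\<lambda>s. Fsrc P g (W x) (W s) (b x) (b s)) has_vector_derivative
       (1/2) *\<^sub>R (E + (0, g *\<^sub>R (P (hh (W x)) *v b'), 0))) (at x)"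
    unfolding Fsrc_def Fec_def Let_def
    by (rule has_vector_derivative_eq_rhs, (rule rules)+)
      (simp add: E_def q0 qx' P_add P_scaleR P_zero matrix_vector_mult_add_rdistrib
        matrix_vector_right_distrib matrix_vector_mult_scaleR commute[of "P _ *v _"]
        scaleR_matrix_vector_assoc[symmetric] algebra_simps)
  ultimately show ?thesis by blast
qed

lemma Fsrc_consistency:
  assumes W: "n_times_differentiable 4 W" and b: "n_times_differentiable 4 b"
    and inv: "\<And>s. invertible (P (hh (W s)))"
  shows "\<exists>E C. ((\<lambda>s. Fhat P g (W s)) has_vector_derivative E) (at x) \<and>
    (\<forall>h. 0 < h \<longrightarrow> h < 1 \<longrightarrow>
       norm ((1/h) *\<^sub>R (Fsrc P g (W x) (W (x + h)) (b x) (b (x + h))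
                         - Fsrc P g (W x) (W (x - h)) (b x) (b (x - h)))
             - (E + (0, g *\<^sub>R (P (hh (W x)) *v vector_derivative b (at x)), 0))) \<le> C * h\<^sup>2)"
proof -
  obtain W' where "\<And>t. (W has_vector_derivative W' t) (at t)"
    using W by (auto simp: numeral_eq_Suc)
  then have W': "(W has_vector_derivative W' x) (at x)" .
  obtain b1 where "\<And>t. (b has_vector_derivative b1 t) (at t)"
    using b by (auto simp: numeral_eq_Suc)
  then have b': "(b has_vector_derivative vector_derivative b (at x)) (at x)"
    using vector_derivative_at by metis
  obtain E where E: "((\<lambda>s. Fhat P g (W s)) has_vector_derivative E) (at x)"
    and A': "((\<lambda>s. Fsrc P g (W x) (W s) (b x) (b s)) has_vector_derivative
       (1/2) *\<^sub>R (E + (0, g *\<^sub>R (P (hh (W x)) *v vector_derivative b (at x)), 0))) (at x)"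
    using has_vector_derivative_Fsrc[OF W' b' inv] by blast
  have "n_times_differentiable 4 (\<lambda>s. Fsrc P g (W x) (W s) (b x) (b s))"
    by (intro n_times_differentiable_Fsrc n_times_differentiable_const W b inv)
  then obtain C where "\<forall>h. 0 < h \<longrightarrow> h < 1 \<longrightarrow>
      norm ((1/h) *\<^sub>R (Fsrc P g (W x) (W (x + h)) (b x) (b (x + h))
                        - Fsrc P g (W x) (W (x - h)) (b x) (b (x - h)))
            - 2 *\<^sub>R ((1/2) *\<^sub>R (E + (0, g *\<^sub>R (P (hh (W x)) *v vector_derivative b (at x)), 0))))
        \<le> C * h\<^sup>2"
    using central_difference_error[OF _ A'] by blast
  then show ?thesis
    using E by (intro exI[of _ E] exI[of _ C]) simp
qed

lemma Gsrc_consistency: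
  assumes W: "n_times_differentiable 4 W" and b: "n_times_differentiable 4 b"
    and inv: "\<And>s. invertible (P (hh (W s)))"
  shows "\<exists>E C. ((\<lambda>s. Ghat P g (W s)) has_vector_derivative E) (at y) \<and>
    (\<forall>h. 0 < h \<longrightarrow> h < 1 \<longrightarrow>
       norm ((1/h) *\<^sub>R (Gsrc P g (W y) (W (y + h)) (b y) (b (y + h))
                         - Gsrc P g (W y) (W (y - h)) (b y) (b (y - h)))
             - (E + (0, 0, g *\<^sub>R (P (hh (W y)) *v vector_derivative b (at y))))) \<le> C * h\<^sup>2)"
proof -
  have W_swap: "n_times_differentiable 4 (\<lambda>s. swap_xy (W s))"
    by (rule n_times_differentiable_bounded_linear[OF bounded_linear_swap_xy W])
  have inv_swap: "\<And>s. invertible (P (hh (swap_xy (W s))))"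
    using inv by simp
  obtain E C
    where E: "((\<lambda>s. Fhat P g (swap_xy (W s))) has_vector_derivative E) (at y)"
      and C: "\<forall>h. 0 < h \<longrightarrow> h < 1 \<longrightarrow>
       norm ((1/h) *\<^sub>R (Fsrc P g (swap_xy (W y)) (swap_xy (W (y + h))) (b y) (b (y + h))
                         - Fsrc P g (swap_xy (W y)) (swap_xy (W (y - h))) (b y) (b (y - h)))
             - (E + (0, g *\<^sub>R (P (hh (swap_xy (W y))) *v vector_derivative b (at y)), 0)))
         \<le> C * h\<^sup>2"
    using Fsrc_consistency[OF W_swap b inv_swap, where x = y and g = g] by blast
  have lin: "swap_xy (X - Y) = swap_xy X - swap_xy Y" "swap_xy (X + Y) = swap_xy X + swap_xy Y"
    "swap_xy (c *\<^sub>R X) = c *\<^sub>R swap_xy X" for X Y :: "'k st" and c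
    by (simp_all add: linear_diff linear_add linear_scale
        bounded_linear.linear[OF bounded_linear_swap_xy])
  have eq: "norm ((1/h) *\<^sub>R (Gsrc P g (W y) (W (y + h)) (b y) (b (y + h))
                         - Gsrc P g (W y) (W (y - h)) (b y) (b (y - h)))
             - (swap_xy E + (0, 0, g *\<^sub>R (P (hh (W y)) *v vector_derivative b (at y)))))
    = norm ((1/h) *\<^sub>R (Fsrc P g (swap_xy (W y)) (swap_xy (W (y + h))) (b y) (b (y + h))
                         - Fsrc P g (swap_xy (W y)) (swap_xy (W (y - h))) (b y) (b (y - h)))
             - (E + (0, g *\<^sub>R (P (hh (swap_xy (W y))) *v vector_derivative b (at y)), 0)))" for h
    unfolding Gsrc_def norm_swap_xy[symmetric, of "_ - (E + _)"] lin by simp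
  show ?thesis
  proof (intro exI conjI allI impI)
    show "((\<lambda>s. Ghat P g (W s)) has_vector_derivative swap_xy E) (at y)"
      unfolding Ghat_swap_xy by (rule bounded_linear.has_vector_derivative[OF bounded_linear_swap_xy E])
    show "norm ((1/h) *\<^sub>R (Gsrc P g (W y) (W (y + h)) (b y) (b (y + h))
                         - Gsrc P g (W y) (W (y - h)) (b y) (b (y - h)))
             - (swap_xy E + (0, 0, g *\<^sub>R (P (hh (W y)) *v vector_derivative b (at y))))) \<le> C * h\<^sup>2"
      if "0 < h" "h < 1" for h
      unfolding eq using C that by blast
  qed
qed

lemma truncation_error:
  assumes U: "smooth2 Uh" and B: "smooth2 Bh" and inv: "\<And>x y. invertible (P (hh (Uh x y)))"
  shows "\<exists>C \<delta>. \<delta> > 0 \<and>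
           (\<forall>dx dy. 0 < dx \<longrightarrow> dx < \<delta> \<longrightarrow> 0 < dy \<longrightarrow> dy < \<delta> \<longrightarrow>
              norm (scheme_rhs P g dx dy
                      (\<lambda>i j. Uh (x + of_int i * dx) (y + of_int j * dy))
                      (\<lambda>i j. Bh (x + of_int i * dx) (y + of_int j * dy)) 0 0
                    - (- pdx (\<lambda>a b. Fhat P g (Uh a b)) x y
                       - pdy (\<lambda>a b. Ghat P g (Uh a b)) x y
                       + Shat P g (Uh x y) (pdx Bh x y) (pdy Bh x y)))
              \<le> C * (dx\<^sup>2 + dy\<^sup>2))"
proof -
  have Ux: "n_times_differentiable 4 (\<lambda>s. Uh s y)" and Uy: "n_times_differentiable 4 (\<lambda>s. Uh x s)"
    and Bx: "n_times_differentiable 4 (\<lambda>s. Bh s y)" and By: "n_times_differentiable 4 (\<lambda>s. Bh x s)"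
    using smooth2_n_times_differentiable[OF U] smooth2_n_times_differentiable[OF B] by blast+
  obtain Ex Cx where Ex: "((\<lambda>s. Fhat P g (Uh s y)) has_vector_derivative Ex) (at x)"
    and Cx: "\<And>h. 0 < h \<Longrightarrow> h < 1 \<Longrightarrow>
       norm ((1/h) *\<^sub>R (Fsrc P g (Uh x y) (Uh (x + h) y) (Bh x y) (Bh (x + h) y)
                         - Fsrc P g (Uh x y) (Uh (x - h) y) (Bh x y) (Bh (x - h) y))
             - (Ex + (0, g *\<^sub>R (P (hh (Uh x y)) *v pdx Bh x y), 0))) \<le> Cx * h\<^sup>2"
    using Fsrc_consistency[OF Ux Bx inv, where x = x and g = g] unfolding pdx_def by blast
  obtain Ey Cy where Ey: "((\<lambda>s. Ghat P g (Uh x s)) has_vector_derivative Ey) (at y)"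
    and Cy: "\<And>h. 0 < h \<Longrightarrow> h < 1 \<Longrightarrow>
       norm ((1/h) *\<^sub>R (Gsrc P g (Uh x y) (Uh x (y + h)) (Bh x y) (Bh x (y + h))
                         - Gsrc P g (Uh x y) (Uh x (y - h)) (Bh x y) (Bh x (y - h)))
             - (Ey + (0, 0, g *\<^sub>R (P (hh (Uh x y)) *v pdy Bh x y)))) \<le> Cy * h\<^sup>2"
    using Gsrc_consistency[OF Uy By inv, where y = y and g = g] unfolding pdy_def by blast
  let ?S = "\<lambda>dx dy. scheme_rhs P g dx dy (\<lambda>i j. Uh (x + of_int i * dx) (y + of_int j * dy))
                      (\<lambda>i j. Bh (x + of_int i * dx) (y + of_int j * dy)) 0 0"
  let ?T = "- pdx (\<lambda>a b. Fhat P g (Uh a b)) x y - pdy (\<lambda>a b. Ghat P g (Uh a b)) x y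
            + Shat P g (Uh x y) (pdx Bh x y) (pdy Bh x y)"
  have "pdx (\<lambda>a b. Fhat P g (Uh a b)) x y = Ex" "pdy (\<lambda>a b. Ghat P g (Uh a b)) x y = Ey"
    unfolding pdx_def pdy_def by (simp_all add: vector_derivative_at Ex Ey)
  then have T: "?T = - (Ex + (0, g *\<^sub>R (P (hh (Uh x y)) *v pdx Bh x y), 0))
                     - (Ey + (0, 0, g *\<^sub>R (P (hh (Uh x y)) *v pdy Bh x y)))"
    by (simp add: Shat_def)
  have "norm (?S dx dy - ?T) \<le> (\<bar>Cx\<bar> + \<bar>Cy\<bar>) * (dx\<^sup>2 + dy\<^sup>2)"
    if "0 < dx" "dx < 1" "0 < dy" "dy < 1" for dx dy
  proof -
    let ?ax = "(1/dx) *\<^sub>R (Fsrc P g (Uh x y) (Uh (x + dx) y) (Bh x y) (Bh (x + dx) y)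
                         - Fsrc P g (Uh x y) (Uh (x - dx) y) (Bh x y) (Bh (x - dx) y))
             - (Ex + (0, g *\<^sub>R (P (hh (Uh x y)) *v pdx Bh x y), 0))"
    let ?ay = "(1/dy) *\<^sub>R (Gsrc P g (Uh x y) (Uh x (y + dy)) (Bh x y) (Bh x (y + dy))
                         - Gsrc P g (Uh x y) (Uh x (y - dy)) (Bh x y) (Bh x (y - dy)))
             - (Ey + (0, 0, g *\<^sub>R (P (hh (Uh x y)) *v pdy Bh x y)))"
    have "?S dx dy - ?T = - (?ax + ?ay)"
      unfolding T scheme_rhs_eq_Fsrc_Gsrc by (simp add: algebra_simps zero_prod_def)
    then have "norm (?S dx dy - ?T) \<le> norm ?ax + norm ?ay"
      by (simp only: norm_minus_cancel norm_triangle_ineq)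
    also have "\<dots> \<le> Cx * dx\<^sup>2 + Cy * dy\<^sup>2"
      using Cx[of dx] Cy[of dy] that by (intro add_mono)
    also have "\<dots> \<le> (\<bar>Cx\<bar> + \<bar>Cy\<bar>) * (dx\<^sup>2 + dy\<^sup>2)"
      by (simp add: distrib_left distrib_right add_mono mult_right_mono
          add_increasing add_increasing2)
    finally show ?thesis .
  qed
  then show ?thesis
    by (intro exI[of _ "\<bar>Cx\<bar> + \<bar>Cy\<bar>"] exI[of _ 1]) auto
qed

end

theorem theorem4p1:
  fixes \<rho> :: "real^'d \<Rightarrow> real"
    and \<phi> :: "'k::finite \<Rightarrow> real^'d \<Rightarrow> real"
    and k1 :: 'k
    and g :: real
  assumes basis: "sg_basis \<rho> \<phi> k1"
    and g_pos: "g > 0"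
  shows
    \<comment> \<open>well-balanced\<close>
    "(\<forall>dx dy. dx > 0 \<longrightarrow> dy > 0 \<longrightarrow>
        (\<forall>(U::int \<Rightarrow> int \<Rightarrow> 'k st) (B::int \<Rightarrow> int \<Rightarrow> real^'k) (C::real^'k).
           (\<forall>i j. pos_def (Pop \<rho> \<phi> (hh (U i j)))) \<longrightarrow>
           (\<forall>i j. qx (U i j) = 0 \<and> qy (U i j) = 0 \<and> hh (U i j) + B i j = C) \<longrightarrow>
           (\<forall>i j. scheme_rhs (Pop \<rho> \<phi>) g dx dy U B i j = 0)))
     \<and>
     \<comment> \<open>energy conservative, with two-point numerical energy fluxes\<close>
     (\<forall>dx dy. dx > 0 \<longrightarrow> dy > 0 \<longrightarrow>
        (\<exists>(Hf::'k st \<Rightarrow> 'k st \<Rightarrow> real^'k \<Rightarrow> real^'k \<Rightarrow> real)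
           (Kf::'k st \<Rightarrow> 'k st \<Rightarrow> real^'k \<Rightarrow> real^'k \<Rightarrow> real).
          \<forall>(U::real \<Rightarrow> int \<Rightarrow> int \<Rightarrow> 'k st) (B::int \<Rightarrow> int \<Rightarrow> real^'k).
            (\<forall>t i j. pos_def (Pop \<rho> \<phi> (hh (U t i j)))) \<longrightarrow>
            (\<forall>t i j. ((\<lambda>s. U s i j) has_vector_derivative
                        scheme_rhs (Pop \<rho> \<phi>) g dx dy (U t) B i j) (at t)) \<longrightarrow>
            (\<forall>t i j. ((\<lambda>s. energy (Pop \<rho> \<phi>) g (U s i j) (B i j)) has_real_derivative
                 (- (Hf (U t i j) (U t (i+1) j) (B i j) (B (i+1) j)
                     - Hf (U t (i-1) j) (U t i j) (B (i-1) j) (B i j)) / dx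
                  - (Kf (U t i j) (U t i (j+1)) (B i j) (B i (j+1))
                     - Kf (U t i (j-1)) (U t i j) (B i (j-1)) (B i j)) / dy)) (at t))))
     \<and>
     \<comment> \<open>local truncation error O(dx^2 + dy^2)\<close>
     (\<forall>(Uh::real \<Rightarrow> real \<Rightarrow> 'k st) (Bh::real \<Rightarrow> real \<Rightarrow> real^'k).
        smooth2 Uh \<longrightarrow> smooth2 Bh \<longrightarrow> (\<forall>x y. pos_def (Pop \<rho> \<phi> (hh (Uh x y)))) \<longrightarrow>
        (\<forall>x y. \<exists>C \<delta>. \<delta> > 0 \<and>
           (\<forall>dx dy. 0 < dx \<longrightarrow> dx < \<delta> \<longrightarrow> 0 < dy \<longrightarrow> dy < \<delta> \<longrightarrow>
              norm (scheme_rhs (Pop \<rho> \<phi>) g dx dy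
                      (\<lambda>i j. Uh (x + of_int i * dx) (y + of_int j * dy))
                      (\<lambda>i j. Bh (x + of_int i * dx) (y + of_int j * dy)) 0 0
                    - (- pdx (\<lambda>a b. Fhat (Pop \<rho> \<phi>) g (Uh a b)) x y
                       - pdy (\<lambda>a b. Ghat (Pop \<rho> \<phi>) g (Uh a b)) x y
                       + Shat (Pop \<rho> \<phi>) g (Uh x y) (pdx Bh x y) (pdy Bh x y)))
              \<le> C * (dx^2 + dy^2))))"
proof -
  interpret symmetric_product "Pop \<rho> \<phi>"
    by (rule symmetric_product_Pop)
  show ?thesis
    apply (intro conjI allI impI)
      subgoal by (rule well_balanced) blast
     subgoal
       by (rule exI[of _ "energy_flux_x (Pop \<rho> \<phi>) g"], rule exI[of _ "energy_flux_y (Pop \<rho> \<phi>) g"],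
           intro allI impI energy_conservative) (auto intro: pos_def_invertible)
    subgoal by (rule truncation_error) (auto intro: pos_def_invertible)
    done
qed

end
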